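(* Let $k\ge2$, $1\le m\le k-1$, and let $(k_1,\dots,k_m)$ be an ordered partition of $k$ into positive integers. Let $X_{k_1,\dots,k_m}$ be the set of $k$-admissible $m\times k$ matrices $D$ with entries $d_{ij}\in\{0,\pm1\}$, having exactly one nonzero entry in each column and exactly $k_i$ nonzero entries in the $i$-th row. Let $c>\frac12$ and $\delta>0$ be fixed. Then $$I(D,n,c,\delta)=\delta^{m-2kc}\prod_{i=1}^m\frac{1}{2k_ic-1}$$ for all $D\in X_{k_1,\dots,k_m}$ and all $n\ge1$.
   Context: Admissible matrices: for $k\ge2$, a division $(\nu,\mu)$ of $\{1,\dots,k\}$ consists of $1\le m\le k-1$ and strictly increasing sequences $\nu_1<\dots<\nu_m$, $\mu_1<\dots<\mu_{k-m}$ in $\{1,\dots,k\}$ which are disjoint. Given a positive integer $q$, an $m\times k$ integer matrix $D=(d_{ij})$ is $(\nu,\mu)$-admissible (with denominator $q$) if no column vanishes, the gcd of its entries is $1$, $d_{i\nu_j}=q\delta_{ij}$ for $1\le i,j\le m$, and $d_{i\mu_j}=0$ whenever $\mu_j<\nu_i$; $D$ is $k$-admissible if it is $(\nu,\mu)$-admissible for some division and some $q$ (for matrices with entries in $\{0,\pm1\}$ necessarily $q=1$). $V_n=\pi^{n/2}/\Gamma(\frac n2+1)$, $R_n(\delta)=(\delta/V_n)^{1/n}$, $f_{c,\delta}(\mathbf x)=|\mathbf x|^{-2cn}$ if $|\mathbf x|>R_n(\delta)$ and $0$ otherwise, and for a $k$-admissible $m\times k$ matrix $D$ with denominator $q$,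 $$I(D,n,c,\delta)=V_n^{-2kc}\int_{\mathbb R^n}\cdots\int_{\mathbb R^n}\prod_{j=1}^k f_{c,\delta}\Big(\sum_{i=1}^m\frac{d_{ij}}{q}\mathbf x_i\Big)\,d\mathbf x_1\cdots d\mathbf x_m.$$ *)

theory Defs
  imports "HOL-Analysis.Analysis"
begin

text \<open>Indices are 0-based: rows i < m, columns j < k. An m x k integer matrix is
  a function d :: nat => nat => int, only entries with i < m, j < k being relevant.\<close>

definition is_division :: "nat \<Rightarrow> nat \<Rightarrow> (nat \<Rightarrow> nat) \<Rightarrow> (nat \<Rightarrow> nat) \<Rightarrow> bool" where
  "is_division k m \<nu> \<mu> \<longleftrightarrow>
     1 \<le> m \<and> m \<le> k - 1 \<and>
     strict_mono_on {..<m} \<nu> \<and> \<nu> ` {..<m} \<subseteq> {..<k} \<and>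
     strict_mono_on {..<k - m} \<mu> \<and> \<mu> ` {..<k - m} \<subseteq> {..<k} \<and>
     \<nu> ` {..<m} \<inter> \<mu> ` {..<k - m} = {}"

definition admissible_div ::
  "nat \<Rightarrow> nat \<Rightarrow> int \<Rightarrow> (nat \<Rightarrow> nat) \<Rightarrow> (nat \<Rightarrow> nat) \<Rightarrow> (nat \<Rightarrow> nat \<Rightarrow> int) \<Rightarrow> bool" where
  "admissible_div m k q \<nu> \<mu> D \<longleftrightarrow>
     is_division k m \<nu> \<mu> \<and> q > 0 \<and>
     (\<forall>j<k. \<exists>i<m. D i j \<noteq> 0) \<and>
     Gcd {D i j | i j. i < m \<and> j < k} = 1 \<and>
     (\<forall>i<m. \<forall>j<m. D i (\<nu> j) = (if i = j then q else 0)) \<and>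
     (\<forall>i<m. \<forall>j<k - m. \<mu> j < \<nu> i \<longrightarrow> D i (\<mu> j) = 0)"

definition admissible_denom :: "nat \<Rightarrow> nat \<Rightarrow> int \<Rightarrow> (nat \<Rightarrow> nat \<Rightarrow> int) \<Rightarrow> bool" where
  "admissible_denom m k q D \<longleftrightarrow> (\<exists>\<nu> \<mu>. admissible_div m k q \<nu> \<mu> D)"

definition k_admissible :: "nat \<Rightarrow> nat \<Rightarrow> (nat \<Rightarrow> nat \<Rightarrow> int) \<Rightarrow> bool" where
  "k_admissible m k D \<longleftrightarrow> 2 \<le> k \<and> (\<exists>q. admissible_denom m k q D)"

definition X_set :: "nat \<Rightarrow> nat \<Rightarrow> (nat \<Rightarrow> nat) \<Rightarrow> (nat \<Rightarrow> nat \<Rightarrow> int) set" where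
  "X_set m k kk = {D. k_admissible m k D \<and>
      (\<forall>i<m. \<forall>j<k. D i j \<in> {0, 1, -1}) \<and>
      (\<forall>j<k. card {i. i < m \<and> D i j \<noteq> 0} = 1) \<and>
      (\<forall>i<m. card {j. j < k \<and> D i j \<noteq> 0} = kk i)}"

definition V :: "nat \<Rightarrow> real" where
  "V n = pi powr (real n / 2) / Gamma (real n / 2 + 1)"

definition R :: "nat \<Rightarrow> real \<Rightarrow> real" where
  "R n \<delta> = (\<delta> / V n) powr (1 / real n)"

definition f_cd :: "real \<Rightarrow> real \<Rightarrow> 'n::finite itself \<Rightarrow> real ^ 'n \<Rightarrow> real" where
  "f_cd c \<delta> _ x = (if norm x > R CARD('n) \<delta> then norm x powr (- 2 * c * real CARD('n)) else 0)"

text \<open>I(D,n,c,delta) with n = CARD('n), as a (nonnegative, possibly infinite)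
  integral over (R^n)^m, realised as the product measure over {..<m}.\<close>
definition I_int :: "nat \<Rightarrow> nat \<Rightarrow> int \<Rightarrow> (nat \<Rightarrow> nat \<Rightarrow> int) \<Rightarrow> 'n::finite itself \<Rightarrow> real \<Rightarrow> real \<Rightarrow> ennreal" where
  "I_int m k q D T c \<delta> =
     ennreal (V CARD('n) powr (- 2 * real k * c)) *
     (\<integral>\<^sup>+ x. ennreal (\<Prod>j<k. f_cd c \<delta> T
          (\<Sum>i<m. (real_of_int (D i j) / real_of_int q) *\<^sub>R (x i :: real ^ 'n)))
       \<partial>(PiM {..<m} (\<lambda>_. lborel)))"

end

theory Submission
  imports Defs
begin

(* Since every entry of D is 0 or +-1 with a single nonzero entry per column, the denominator is
   q = 1 and, f being even, the integrand splits as the product over the rows i of f(x_i)^(k_i).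
   The integral therefore factors into m radial integrals of |y|^(-a), a = 2 c k_i n, over
   |y| > R_n(delta). Writing |y|^(-a) as the integral of a s^(-a-1) over s >= |y| and exchanging
   the order of integration reduces each of them to volumes of annuli, giving
   V_n n / (a - n) R_n(delta)^(n-a); since V_n R_n(delta)^n = delta, all powers of V_n cancel
   against the prefactor V_n^(-2kc). *)

lemma nn_integral_powr_tail:
  fixes a t :: real
  assumes "a > 0" and "t > 0"
  shows "(\<integral>\<^sup>+s. ennreal (a * s powr (-a-1)) * indicator {t..} s \<partial>lborel) = ennreal (t powr -a)"
proof -
  have "(\<integral>\<^sup>+s. ennreal (a * s powr (-a-1)) * indicator {t..} s \<partial>lborel) = ennreal (0 - - (t powr -a))"
  proof (rule nn_integral_FTC_atLeast)
    fix s assume "t \<le> s"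
    with assms show "((\<lambda>s. - (s powr -a)) has_real_derivative a * s powr (-a-1)) (at s)"
      by (auto intro!: derivative_eq_intros)
    show "0 \<le> a * s powr (-a-1)" using assms by simp
  next
    show "((\<lambda>s::real. - (s powr -a)) \<longlongrightarrow> 0) at_top"
      using tendsto_minus[OF tendsto_neg_powr[OF _ filterlim_ident]] assms by force
  qed simp
  then show ?thesis by simp
qed

lemma emeasure_annulus:
  assumes "0 \<le> r" and "r \<le> s"
  shows "emeasure lborel (cball (0::'a::euclidean_space) s - cball 0 r)
           = ennreal (unit_ball_vol DIM('a) * (s ^ DIM('a) - r ^ DIM('a)))"
proof -
  have "emeasure lborel (cball (0::'a) s - cball 0 r) = emeasure lborel (cball (0::'a) s) - emeasure lborel (cball (0::'a) r)"
    using assms by (intro emeasure_Diff) (auto simp: emeasure_cball)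
  also have "\<dots> = ennreal (unit_ball_vol DIM('a) * (s ^ DIM('a) - r ^ DIM('a)))"
    using assms by (simp add: emeasure_cball ennreal_minus[symmetric] right_diff_distrib power_mono)
  finally show ?thesis .
qed

lemma nn_integral_annulus_tail:
  fixes a r v :: real and n :: nat
  assumes "a > n" and "r > 0" and "v \<ge> 0"
  shows "(\<integral>\<^sup>+s. ennreal (a * v * (s ^ n - r ^ n) * s powr (-a-1)) * indicator {r..} s \<partial>lborel)
           = ennreal (v * n / (a - n) * r powr (n - a))"
proof -
  define F where "F s = v * (a / (n - a) * s powr (n - a) + r ^ n * s powr -a)" for s
  have "(\<integral>\<^sup>+s. ennreal (a * v * (s ^ n - r ^ n) * s powr (-a-1)) * indicator {r..} s \<partial>lborel)
          = ennreal (0 - F r)"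
  proof (rule nn_integral_FTC_atLeast)
    fix s assume "r \<le> s"
    then have s: "s > 0" using assms by linarith
    have "s ^ n * s powr (-a-1) = s powr (n - a - 1)"
      using s by (simp add: powr_realpow[symmetric] powr_add[symmetric]) (simp add: algebra_simps)
    then have deriv_eq: "v * (a / (n - a) * ((n - a) * s powr (n - a - 1)) + r ^ n * (-a * s powr (-a-1)))
                 = a * v * (s ^ n - r ^ n) * s powr (-a-1)"
      using assms by (simp add: field_simps)
    have "(F has_real_derivative
        v * (a / (n - a) * ((n - a) * s powr (n - a - 1)) + r ^ n * (-a * s powr (-a-1)))) (at s)"
      unfolding F_def using s by (auto intro!: derivative_eq_intros)
    then show "(F has_real_derivative a * v * (s ^ n - r ^ n) * s powr (-a-1)) (at s)"
      by (rule DERIV_cong) (fact deriv_eq)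
    show "0 \<le> a * v * (s ^ n - r ^ n) * s powr (-a-1)"
      using assms \<open>r \<le> s\<close> by (intro mult_nonneg_nonneg) (auto intro: power_mono)
  next
    have lim: "((\<lambda>s::real. s powr b) \<longlongrightarrow> 0) at_top" if "b < 0" for b
      using tendsto_neg_powr[OF that filterlim_ident] .
    show "(F \<longlongrightarrow> 0) at_top"
      unfolding F_def using assms
      by (auto intro!: tendsto_mult_right_zero tendsto_add_zero tendsto_divide_zero lim)
  qed simp
  also have "0 - F r = v * n / (a - n) * r powr (n - a)"
  proof -
    have "r ^ n * r powr -a = r powr (n - a)"
      using assms by (simp add: powr_realpow[symmetric] powr_add[symmetric])
    then show ?thesis
      using assms by (simp add: F_def field_simps)
  qed
  finally show ?thesis .
qed

lemma nn_integral_annulus_const: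
  fixes b r s :: real
  assumes "b \<ge> 0" and "r > 0"
  shows "(\<integral>\<^sup>+(x::'a::euclidean_space). (if r < norm x \<and> norm x \<le> s then ennreal b else 0) \<partial>lborel)
           = ennreal (b * unit_ball_vol DIM('a) * (s ^ DIM('a) - r ^ DIM('a))) * indicator {r..} s"
proof -
  have "(\<integral>\<^sup>+(x::'a). (if r < norm x \<and> norm x \<le> s then ennreal b else 0) \<partial>lborel)
          = ennreal b * emeasure lborel (cball (0::'a) s - cball 0 r)"
    by (subst nn_integral_cmult_indicator[symmetric])
       (auto intro!: nn_integral_cong simp: indicator_def)
  also have "\<dots> = ennreal (b * unit_ball_vol DIM('a) * (s ^ DIM('a) - r ^ DIM('a))) * indicator {r..} s"
  proof (cases "r \<le> s")
    case True
    then have "emeasure lborel (cball (0::'a) s - cball 0 r)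
                 = ennreal (unit_ball_vol DIM('a) * (s ^ DIM('a) - r ^ DIM('a)))"
      using assms by (intro emeasure_annulus) auto
    then show ?thesis
      using True assms by (simp add: ennreal_mult'[symmetric] mult.assoc)
  next
    case False
    then have empty: "cball (0::'a) s - cball 0 r = {}" by auto
    show ?thesis unfolding empty using False by simp
  qed
  finally show ?thesis .
qed

lemma nn_integral_norm_powr_outside_cball:
  fixes a r :: real
  assumes a: "a > DIM('a)" and r: "r > 0"
  shows "(\<integral>\<^sup>+(x::'a::euclidean_space). ennreal (if r < norm x then norm x powr -a else 0) \<partial>lborel)
           = ennreal (unit_ball_vol DIM('a) * DIM('a) / (a - DIM('a)) * r powr (DIM('a) - a))"
proof -
  have a0: "a > 0" using a of_nat_0_le_iff[of "DIM('a)"] by linarith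
  \<comment> \<open>layer-cake kernel: integrating h x over s gives the integrand at x\<close>
  define h where "h x s = (if r < norm x \<and> norm x \<le> s then ennreal (a * s powr (-a-1)) else 0)"
    for x :: 'a and s :: real
  have "(\<integral>\<^sup>+s. h x s \<partial>lborel) = ennreal (if r < norm x then norm x powr -a else 0)" for x
  proof (cases "r < norm x")
    case True
    then have "(\<integral>\<^sup>+s. h x s \<partial>lborel) = (\<integral>\<^sup>+s. ennreal (a * s powr (-a-1)) * indicator {norm x..} s \<partial>lborel)"
      by (intro nn_integral_cong) (auto simp: h_def indicator_def)
    also have "\<dots> = ennreal (norm x powr -a)"
      using True r by (intro nn_integral_powr_tail a0) linarith
    finally show ?thesis using True by simp
  qed (simp add: h_def)
  then have "(\<integral>\<^sup>+(x::'a). ennreal (if r < norm x then norm x powr -a else 0) \<partial>lborel)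
               = (\<integral>\<^sup>+x. \<integral>\<^sup>+s. h x s \<partial>lborel \<partial>lborel)"
    by simp
  also have "\<dots> = (\<integral>\<^sup>+s. \<integral>\<^sup>+x. h x s \<partial>lborel \<partial>lborel)"
  proof (rule pair_sigma_finite.Fubini'[symmetric])
    show "pair_sigma_finite lborel lborel"
      by (simp add: pair_sigma_finite_def sigma_finite_lborel)
    show "case_prod h \<in> borel_measurable (lborel \<Otimes>\<^sub>M lborel)"
      unfolding h_def by measurable
  qed
  also have "\<dots> = (\<integral>\<^sup>+s. ennreal (a * unit_ball_vol DIM('a) * (s ^ DIM('a) - r ^ DIM('a)) * s powr (-a-1))
                       * indicator {r..} s \<partial>lborel)"
    using r a0 by (intro nn_integral_cong) (simp add: h_def nn_integral_annulus_const mult_ac)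
  also have "\<dots> = ennreal (unit_ball_vol DIM('a) * DIM('a) / (a - DIM('a)) * r powr (DIM('a) - a))"
    using nn_integral_annulus_tail[OF a r, of "unit_ball_vol DIM('a)"] by (simp add: mult.assoc)
  finally show ?thesis .
qed

lemma f_cd_uminus [simp]: "f_cd c \<delta> T (- x) = f_cd c \<delta> T x"
  by (simp add: f_cd_def)

lemma f_cd_nonneg: "0 \<le> f_cd c \<delta> T x"
  by (simp add: f_cd_def)

lemma f_cd_borel_measurable [measurable]: "f_cd c \<delta> T \<in> borel_measurable borel"
  unfolding f_cd_def by measurable

lemma V_pos: "V n > 0"
  using unit_ball_vol_pos[of "real n"] by (simp add: V_def unit_ball_vol_def)

lemma nn_integral_f_cd_power:
  fixes c \<delta> :: real and p :: nat
  assumes c: "c > 1/2" and \<delta>: "\<delta> > 0" and p: "p \<ge> 1"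
  shows "(\<integral>\<^sup>+y. ennreal (f_cd c \<delta> TYPE('n::finite) y ^ p) \<partial>lborel)
           = ennreal (V CARD('n) powr (2 * c * p) * (\<delta> powr (1 - 2 * c * p) / (2 * real p * c - 1)))"
proof -
  define n where "n = real CARD('n)"
  define a where "a = 2 * c * p * n"
  define r where "r = R CARD('n) \<delta>"
  have n: "n > 0" by (simp add: n_def)
  have "2 * c * 1 \<le> 2 * c * p" using c p by (intro mult_left_mono) auto
  then have "2 * c * p > 1" using c by linarith
  then have a: "a > n" using n by (simp add: a_def)
  have V: "V CARD('n) > 0" by (rule V_pos)
  then have r: "r > 0" using \<delta> by (simp add: r_def R_def)
  have "f_cd c \<delta> TYPE('n) y ^ p = (if r < norm y then norm y powr -a else 0)" for y :: "real ^ 'n"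
  proof (cases "r < norm y")
    case True
    then have "norm y > 0" using r by linarith
    with True show ?thesis
      by (simp add: f_cd_def r_def a_def n_def powr_power mult_ac)
  next
    case False
    with p show ?thesis by (simp add: f_cd_def r_def)
  qed
  then have "(\<integral>\<^sup>+y. ennreal (f_cd c \<delta> TYPE('n) y ^ p) \<partial>lborel)
               = (\<integral>\<^sup>+(y::real ^ 'n). ennreal (if r < norm y then norm y powr -a else 0) \<partial>lborel)"
    by simp
  also have "\<dots> = ennreal (V CARD('n) * n / (a - n) * r powr (n - a))"
    using nn_integral_norm_powr_outside_cball[where 'a="real ^ 'n", of a r] a r by (simp add: n_def V_def unit_ball_vol_def)
  also have "V CARD('n) * n / (a - n) * r powr (n - a)
               = V CARD('n) powr (2 * c * p) * (\<delta> powr (1 - 2 * c * p) / (2 * real p * c - 1))"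
  proof -
    have "1 / n * (n - a) = 1 - 2 * c * p" using n by (simp add: a_def field_simps)
    then have "r powr (n - a) = (\<delta> / V CARD('n)) powr (1 - 2 * c * p)"
      by (simp add: r_def R_def powr_powr n_def)
    also have "\<dots> = \<delta> powr (1 - 2 * c * p) * V CARD('n) powr (2 * c * p) / V CARD('n)"
      using V \<delta> by (simp add: powr_divide powr_diff)
    finally show ?thesis
      using a n V by (simp add: a_def field_simps)
  qed
  finally show ?thesis .
qed

lemma prod_fibres_power:
  assumes "finite J" and "\<And>j. j \<in> J \<Longrightarrow> r j \<in> I" and "finite I"
  shows "(\<Prod>j\<in>J. h (r j)) = (\<Prod>i\<in>I. h i ^ card {j \<in> J. r j = i})"
proof -
  have "(\<Prod>j\<in>J. h (r j)) = (\<Prod>i\<in>I. \<Prod>j\<in>{j \<in> J. r j = i}. h (r j))"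
    using assms by (intro prod.group[symmetric]) auto
  also have "\<dots> = (\<Prod>i\<in>I. h i ^ card {j \<in> J. r j = i})"
    by (intro prod.cong) auto
  finally show ?thesis .
qed

lemma prod_columns_single_unit_entry:
  fixes g :: "'a::real_vector \<Rightarrow> 'b::comm_monoid_mult" and D :: "nat \<Rightarrow> nat \<Rightarrow> int"
  assumes entries: "\<forall>i<m. \<forall>j<k. D i j \<in> {0, 1, -1}"
    and single: "\<forall>j<k. card {i. i < m \<and> D i j \<noteq> 0} = 1"
    and even: "\<And>x. g (- x) = g x"
  shows "(\<Prod>j<k. g (\<Sum>i<m. real_of_int (D i j) *\<^sub>R x i))
           = (\<Prod>i<m. g (x i) ^ card {j. j < k \<and> D i j \<noteq> 0})"
proof -
  have "\<forall>j. \<exists>i. j < k \<longrightarrow> {i'. i' < m \<and> D i' j \<noteq> 0} = {i}"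
    using single by (auto simp: card_1_singleton_iff)
  then obtain r where r: "\<And>j. j < k \<Longrightarrow> {i. i < m \<and> D i j \<noteq> 0} = {r j}"
    by metis
  then have r_lt: "\<And>j. j < k \<Longrightarrow> r j < m"
    and nonzero_iff: "\<And>i j. j < k \<Longrightarrow> i < m \<Longrightarrow> D i j \<noteq> 0 \<longleftrightarrow> i = r j"
    by blast+
  have "g (\<Sum>i<m. real_of_int (D i j) *\<^sub>R x i) = g (x (r j))" if j: "j < k" for j
  proof -
    have "(\<Sum>i<m. real_of_int (D i j) *\<^sub>R x i) = (\<Sum>i\<in>{r j}. real_of_int (D i j) *\<^sub>R x i)"
      using j r_lt nonzero_iff by (intro sum.mono_neutral_right) auto
    moreover have "D (r j) j \<in> {0, 1, -1}" and "D (r j) j \<noteq> 0"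
      using entries j r_lt[OF j] nonzero_iff[OF j r_lt[OF j]] by auto
    ultimately show ?thesis using even by auto
  qed
  then have "(\<Prod>j<k. g (\<Sum>i<m. real_of_int (D i j) *\<^sub>R x i)) = (\<Prod>j<k. g (x (r j)))"
    by simp
  also have "\<dots> = (\<Prod>i<m. g (x i) ^ card {j \<in> {..<k}. r j = i})"
    using r_lt by (intro prod_fibres_power) auto
  also have "\<dots> = (\<Prod>i<m. g (x i) ^ card {j. j < k \<and> D i j \<noteq> 0})"
    using nonzero_iff by (intro prod.cong refl arg_cong[where f = card] arg_cong2[where f = "(^)"]) auto
  finally show ?thesis .
qed

lemma admissible_denom_unit_entries:
  assumes "admissible_denom m k q D" and "1 \<le> m" and "\<forall>i<m. \<forall>j<k. D i j \<in> {0, 1, -1}"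
  shows "q = 1"
proof -
  obtain \<nu> \<mu> where "admissible_div m k q \<nu> \<mu> D"
    using assms(1) by (auto simp: admissible_denom_def)
  then have "D 0 (\<nu> 0) = q" "q > 0" "\<nu> 0 < k"
    using assms(2) by (auto simp: admissible_div_def is_division_def image_subset_iff)
  with assms(2,3) show ?thesis by force
qed

lemma powr_prod_row_factors:
  fixes b \<delta> c :: real and kk :: "nat \<Rightarrow> nat"
  assumes b: "b > 0" and \<delta>: "\<delta> > 0" and sum_kk: "(\<Sum>i<m. kk i) = k"
  shows "b powr (- 2 * real k * c) *
           (\<Prod>i<m. b powr (2 * c * kk i) * (\<delta> powr (1 - 2 * c * kk i) / (2 * real (kk i) * c - 1)))
         = \<delta> powr (real m - 2 * real k * c) * (\<Prod>i<m. 1 / (2 * real (kk i) * c - 1))"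
proof -
  have sum_kk_real: "(\<Sum>i<m. real (kk i)) = real k"
    using sum_kk by (metis of_nat_sum)
  have "(\<Sum>i<m. 2 * c * kk i) = 2 * c * k"
    using sum_kk_real by (simp add: sum_distrib_left[symmetric])
  moreover have "(\<Sum>i<m. 1 - 2 * c * kk i) = m - 2 * c * k"
    using sum_kk_real by (simp add: sum_subtractf sum_distrib_left[symmetric])
  moreover have "(\<Prod>i<m. b powr (2 * c * kk i)) = b powr (\<Sum>i<m. 2 * c * kk i)"
    using b by (simp add: powr_sum)
  moreover have "(\<Prod>i<m. \<delta> powr (1 - 2 * c * kk i)) = \<delta> powr (\<Sum>i<m. 1 - 2 * c * kk i)"
    using \<delta> by (simp add: powr_sum)
  moreover have "b powr (- 2 * k * c) * b powr (2 * c * k) = 1"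
    using b by (simp add: powr_add[symmetric])
  ultimately show ?thesis
    by (simp add: prod.distrib prod_dividef mult_ac)
qed

lemma nn_integral_PiM_f_cd_powers:
  fixes c \<delta> :: real and kk :: "nat \<Rightarrow> nat"
  assumes c: "c > 1/2" and \<delta>: "\<delta> > 0" and kk: "\<forall>i<m. 1 \<le> kk i"
  shows "(\<integral>\<^sup>+x. (\<Prod>i<m. ennreal (f_cd c \<delta> TYPE('n::finite) (x i) ^ kk i)) \<partial>PiM {..<m} (\<lambda>_. lborel))
           = ennreal (\<Prod>i<m. V CARD('n) powr (2 * c * kk i) *
                        (\<delta> powr (1 - 2 * c * kk i) / (2 * real (kk i) * c - 1)))"
proof -
  have "2 * real (kk i) * c - 1 > 0" if "i < m" for i
  proof -
    have "2 * 1 * c \<le> 2 * real (kk i) * c" using kk c that by (intro mult_right_mono) auto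
    then show ?thesis using c by linarith
  qed
  then have factor_nonneg: "0 \<le> V CARD('n) powr (2 * c * kk i) *
                               (\<delta> powr (1 - 2 * c * kk i) / (2 * real (kk i) * c - 1))" if "i < m" for i
    using that by (intro mult_nonneg_nonneg divide_nonneg_pos) auto
  have "(\<integral>\<^sup>+x. (\<Prod>i<m. ennreal (f_cd c \<delta> TYPE('n) (x i) ^ kk i)) \<partial>PiM {..<m} (\<lambda>_. lborel))
          = (\<Prod>i<m. \<integral>\<^sup>+y. ennreal (f_cd c \<delta> TYPE('n) y ^ kk i) \<partial>lborel)"
    by (intro product_sigma_finite.product_nn_integral_prod)
       (auto simp: product_sigma_finite_def sigma_finite_lborel)
  also have "\<dots> = (\<Prod>i<m. ennreal (V CARD('n) powr (2 * c * kk i) *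
                     (\<delta> powr (1 - 2 * c * kk i) / (2 * real (kk i) * c - 1))))"
    using kk c \<delta> by (intro prod.cong) (simp_all add: nn_integral_f_cd_power)
  also have "\<dots> = ennreal (\<Prod>i<m. V CARD('n) powr (2 * c * kk i) *
                     (\<delta> powr (1 - 2 * c * kk i) / (2 * real (kk i) * c - 1)))"
    using factor_nonneg by (intro prod_ennreal) simp
  finally show ?thesis .
qed

theorem proposition3p3:
  fixes k m :: nat and kk :: "nat \<Rightarrow> nat" and c \<delta> :: real
    and D :: "nat \<Rightarrow> nat \<Rightarrow> int" and q :: int
  assumes "2 \<le> k" and "1 \<le> m" and "m \<le> k - 1"
    and "\<forall>i<m. 1 \<le> kk i" and "(\<Sum>i<m. kk i) = k"
    and "c > 1/2" and "\<delta> > 0"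
    and "D \<in> X_set m k kk"
    and "admissible_denom m k q D"
  shows "I_int m k q D TYPE('n::finite) c \<delta> =
           ennreal (\<delta> powr (real m - 2 * real k * c) * (\<Prod>i<m. 1 / (2 * real (kk i) * c - 1)))"
proof -
  have entries: "\<forall>i<m. \<forall>j<k. D i j \<in> {0, 1, -1}"
    and single: "\<forall>j<k. card {i. i < m \<and> D i j \<noteq> 0} = 1"
    and rows: "\<forall>i<m. card {j. j < k \<and> D i j \<noteq> 0} = kk i"
    using assms(8) by (auto simp: X_set_def)
  have "q = 1"
    using admissible_denom_unit_entries assms(2,9) entries by blast
  then have "(\<Prod>j<k. f_cd c \<delta> TYPE('n) (\<Sum>i<m. (real_of_int (D i j) / real_of_int q) *\<^sub>R x i))
               = (\<Prod>i<m. f_cd c \<delta> TYPE('n) (x i) ^ kk i)" for x :: "nat \<Rightarrow> real ^ 'n"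
    using prod_columns_single_unit_entry[OF entries single, of "f_cd c \<delta> TYPE('n)"] rows by simp
  then show ?thesis
    using nn_integral_PiM_f_cd_powers[where 'n='n, OF assms(6,7,4)] powr_prod_row_factors[OF V_pos assms(7,5)]
    by (simp add: I_int_def f_cd_nonneg prod_ennreal ennreal_mult'[symmetric])
qed

end
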